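(* Let $d\ge1$, $0<s_0<s_1$, $0<\alpha_0<\alpha_1$, $W=[s_0,s_1]\times[\alpha_0,\alpha_1]$ with interior $W^\circ$, let $g\in L^2_0(\mathbb{T}^d;\mathbb{C})$ and $u_d\in L^2(\mathbb{T}^d;\mathbb{C})$ with Fourier coefficient sequences $\widehat{\mathbf G}=(\hat g_k)_k$, $\widehat{\mathbf U}_d=(\hat u_{d,k})_k$. Let $\varphi\in C^2(W^\circ,\mathbb{R})$ be non-negative and convex with $\varphi(s,\alpha)\to\infty$ whenever $s\to s_0$, $s\to s_1$, $\alpha\to\alpha_0$ or $\alpha\to\alpha_1$. Define $\mathcal{S}(s,\alpha)=\big(\frac{\alpha}{\alpha+|k|^{2s}}\hat g_k\big)_{k\in\mathbb{Z}^d}$ and $$j(s,\alpha)=\frac{1}{2(2\pi)^d}\|\mathcal{S}(s,\alpha)-\widehat{\mathbf U}_d\|_{\ell^2}^2+\varphi(s,\alpha),\quad (s,\alpha)\in W^\circ.$$ Then there exists $(\bar s,\bar\alpha)\in W^\circ$ with $j(\bar s,\bar\alpha)\le j(s,\alpha)$ for all $(s,\alpha)\in W^\circ$ (i.e. an optimal triple $(\bar s,\bar\alpha,\mathcal{S}(\bar s,\bar\alpha))$ exists), and the function with Fourier coefficients $\mathcal{S}(\bar s,\bar\alpha)$ lies in $H^{2\bar s}_0(\mathbb{T}^d;\mathbb{C})$.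
   Context: $\mathbb{T}^d=\mathbb{R}^d/(2\pi\mathbb{Z})^d$; $\hat u_k=\int_{\mathbb{T}^d}u\,e^{-ik\cdot x}dx$; convention $|0|^{2s}=0$. $L^2_0$ is the zero-mean subspace of $L^2$. For $\sigma\ge0$, $H^\sigma_0(\mathbb{T}^d;\mathbb{C})=\{u\in L^2_0:\sum_{k\ne0}|k|^{2\sigma}|\hat u_k|^2<\infty\}$. $\mathcal{S}(s,\alpha)$ is the Fourier coefficient sequence of the solution $u$ of $(-\Delta)^su+\alpha u=\alpha g$, where $(-\Delta)^s u=(2\pi)^{-d}\sum_k|k|^{2s}\hat u_k e^{ik\cdot x}$. *)

theory Defs
  imports "HOL-Analysis.Analysis"
begin

text \<open>Frequencies k in Z^d are modelled as int ^ 'd (the dimension d = CARD('d) \<ge> 1).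
  Functions on the torus are represented by their Fourier coefficient sequences.\<close>

definition knorm :: "int ^ 'd \<Rightarrow> real" where
  "knorm k = sqrt (\<Sum>i\<in>UNIV. (real_of_int (k $ i))\<^sup>2)"

text \<open>l^2 sequences on Z^d (= Fourier coefficients of L^2 functions, by Riesz-Fischer).\<close>
definition ell2 :: "(int ^ 'd \<Rightarrow> complex) \<Rightarrow> bool" where
  "ell2 c \<longleftrightarrow> (\<lambda>k. (cmod (c k))\<^sup>2) summable_on UNIV"

definition ell2_norm_sq :: "(int ^ 'd \<Rightarrow> complex) \<Rightarrow> real" where
  "ell2_norm_sq c = infsum (\<lambda>k. (cmod (c k))\<^sup>2) UNIV"

text \<open>Coefficient sequence of a function in L^2_0 (zero mean).\<close>
definition L2_0 :: "(int ^ 'd \<Rightarrow> complex) \<Rightarrow> bool" where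
  "L2_0 c \<longleftrightarrow> ell2 c \<and> c 0 = 0"

text \<open>Coefficient sequence of a function in H^sigma_0; convention |0|^(2 sigma) = 0 via powr.\<close>
definition H0 :: "real \<Rightarrow> (int ^ 'd \<Rightarrow> complex) \<Rightarrow> bool" where
  "H0 \<sigma> c \<longleftrightarrow> L2_0 c \<and> (\<lambda>k. knorm k powr (2 * \<sigma>) * (cmod (c k))\<^sup>2) summable_on UNIV"

text \<open>S(s,alpha): Fourier coefficients of the solution of (-Delta)^s u + alpha u = alpha g.\<close>
definition solS :: "(int ^ 'd \<Rightarrow> complex) \<Rightarrow> real \<Rightarrow> real \<Rightarrow> int ^ 'd \<Rightarrow> complex" where
  "solS G s \<alpha> k = complex_of_real (\<alpha> / (\<alpha> + knorm k powr (2 * s))) * G k"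

definition C2_on :: "('a::real_normed_vector) set \<Rightarrow> ('a \<Rightarrow> real) \<Rightarrow> bool" where
  "C2_on S f \<longleftrightarrow> (\<exists>Df :: 'a \<Rightarrow> ('a \<Rightarrow>\<^sub>L real). \<exists>D2f :: 'a \<Rightarrow> ('a \<Rightarrow>\<^sub>L ('a \<Rightarrow>\<^sub>L real)).
      (\<forall>x\<in>S. (f has_derivative blinfun_apply (Df x)) (at x)) \<and>
      (\<forall>x\<in>S. (Df has_derivative blinfun_apply (D2f x)) (at x)) \<and>
      continuous_on S D2f)"

end

theory Submission
  imports Defs
begin

text \<open>Since 0 \<le> \<alpha>/(\<alpha> + |k|^(2s)) \<le> 1, the Fourier series of the misfit
  term is dominated, uniformly in (s, \<alpha>), by the summable sequence 2|g_k|^2 + 2|u_k|^2; hence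
  j is continuous on the open rectangle.  As j \<ge> \<phi> blows up at the boundary, a sublevel
  set of j is a compact subset of the open rectangle, on which j attains its minimum.
  Regularity comes from |k|^(2s) \<alpha>/(\<alpha> + |k|^(2s)) \<le> \<alpha>.\<close>

lemma continuous_on_infsum_dominated:
  fixes f :: "'k \<Rightarrow> 'a::topological_space \<Rightarrow> 'b::banach" and h :: "'k \<Rightarrow> real"
  assumes cont: "\<And>k. k \<in> A \<Longrightarrow> continuous_on S (f k)"
    and dom: "\<And>k x. k \<in> A \<Longrightarrow> x \<in> S \<Longrightarrow> norm (f k x) \<le> h k"
    and h: "h summable_on A"
  shows "continuous_on S (\<lambda>x. \<Sum>\<^sub>\<infinity>k\<in>A. f k x)"
proof (rule uniform_limit_theorem)
  show "\<forall>\<^sub>F F in finite_subsets_at_top A. continuous_on S (\<lambda>x. \<Sum>k\<in>F. f k x)"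
    by (auto intro!: continuous_on_sum cont simp: eventually_finite_subsets_at_top)
  show "\<not> trivial_limit (finite_subsets_at_top A)"
    by (simp add: finite_subsets_at_top_neq_bot)
  show "uniform_limit S (\<lambda>F x. \<Sum>k\<in>F. f k x) (\<lambda>x. \<Sum>\<^sub>\<infinity>k\<in>A. f k x) (finite_subsets_at_top A)"
  proof (rule uniform_limitI)
    fix e :: real assume "e > 0"
    have "\<forall>\<^sub>F F in finite_subsets_at_top A. finite F \<and> F \<subseteq> A \<and> dist (sum h F) (infsum h A) < e"
      using tendstoD[OF infsum_tendsto[OF h] \<open>e > 0\<close>]
      by (auto simp: eventually_finite_subsets_at_top elim: eventually_mono)
    then show "\<forall>\<^sub>F F in finite_subsets_at_top A. \<forall>x\<in>S.
        dist (\<Sum>k\<in>F. f k x) (\<Sum>\<^sub>\<infinity>k\<in>A. f k x) < e"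
    proof eventually_elim
      case (elim F)
      then have F: "finite F" "F \<subseteq> A" and tail_h: "infsum h A - sum h F < e"
        by (auto simp: dist_real_def)
      show ?case
      proof
        fix x assume "x \<in> S"
        have norm_f: "(\<lambda>k. norm (f k x)) summable_on A"
          by (rule summable_on_comparison_test[OF h]) (use dom \<open>x \<in> S\<close> in auto)
        have norm_f_tail: "(\<lambda>k. norm (f k x)) summable_on A - F"
          using norm_f by (rule summable_on_subset_banach) blast
        have h_tail: "h summable_on A - F"
          using h by (rule summable_on_subset_banach) blast
        have "(\<Sum>\<^sub>\<infinity>k\<in>A - F. f k x) = (\<Sum>\<^sub>\<infinity>k\<in>A. f k x) - (\<Sum>k\<in>F. f k x)"
          using F by (simp add: infsum_Diff abs_summable_summable[OF norm_f])
        then have "dist (\<Sum>k\<in>F. f k x) (\<Sum>\<^sub>\<infinity>k\<in>A. f k x) = norm (\<Sum>\<^sub>\<infinity>k\<in>A - F. f k x)"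
          by (simp add: dist_norm norm_minus_commute)
        also have "\<dots> \<le> (\<Sum>\<^sub>\<infinity>k\<in>A - F. norm (f k x))"
          using norm_f_tail by (rule norm_infsum_bound)
        also have "\<dots> \<le> infsum h (A - F)"
          using norm_f_tail h_tail by (rule infsum_mono) (use dom \<open>x \<in> S\<close> in auto)
        also have "\<dots> = infsum h A - sum h F"
          using F h by (simp add: infsum_Diff)
        finally show "dist (\<Sum>k\<in>F. f k x) (\<Sum>\<^sub>\<infinity>k\<in>A. f k x) < e"
          using tail_h by linarith
      qed
    qed
  qed
qed

lemma continuous_on_attains_inf_coercive:
  fixes f :: "'a::t2_space \<Rightarrow> 'b::{linorder_topology, unbounded_dense_linorder}"
  assumes cont: "continuous_on P f" and "P \<subseteq> R" "compact R" "P \<noteq> {}"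
    and coercive: "\<forall>l \<in> R - P. filterlim f at_top (at l within P)"
  shows "\<exists>q\<in>P. \<forall>p\<in>P. f q \<le> f p"
proof -
  obtain p0 where "p0 \<in> P" using \<open>P \<noteq> {}\<close> by blast
  define K where "K = P \<inter> f -` {..f p0}"
  obtain C where "closed C" and K_eq: "K = P \<inter> C"
    using continuous_closedin_preimage[OF cont, of "{..f p0}"] by (auto simp: K_def closedin_closed)
  have "closure K \<subseteq> K"
  proof
    fix l assume l: "l \<in> closure K"
    have "l \<in> R"
      using l closure_mono[of K R] \<open>P \<subseteq> R\<close> closure_closed[OF compact_imp_closed[OF \<open>compact R\<close>]]
      by (auto simp: K_def)
    moreover have "l \<in> P"
    proof (rule ccontr)
      assume "l \<notin> P"
      with \<open>l \<in> R\<close> have "\<forall>\<^sub>F x in at l within P. f p0 < f x"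
        using coercive by (simp add: filterlim_at_top_dense)
      then obtain U where "open U" "l \<in> U" and U: "\<forall>x\<in>U. x \<noteq> l \<longrightarrow> x \<in> P \<longrightarrow> f p0 < f x"
        unfolding eventually_at_topological by blast
      then have "U \<inter> K = {}"
        using \<open>l \<notin> P\<close> by (fastforce simp: K_def)
      with \<open>open U\<close> have "U \<inter> closure K = {}"
        by (simp add: open_Int_closure_eq_empty)
      with \<open>l \<in> U\<close> l show False by blast
    qed
    moreover have "l \<in> C"
      using l closure_minimal[of K C] \<open>closed C\<close> K_eq by blast
    ultimately show "l \<in> K" using K_eq by blast
  qed
  then have "compact (R \<inter> K)"
    by (intro compact_Int_closed \<open>compact R\<close>) (simp add: closure_subset_eq)
  then have "compact K"
    using \<open>P \<subseteq> R\<close> by (simp add: K_def Int_absorb1 le_infI1)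
  moreover have "K \<noteq> {}" using \<open>p0 \<in> P\<close> by (auto simp: K_def)
  moreover have "continuous_on K f" using cont by (rule continuous_on_subset) (simp add: K_def)
  ultimately obtain q where "q \<in> K" and q_min: "\<forall>p\<in>K. f q \<le> f p"
    using continuous_attains_inf by blast
  have "f q \<le> f p" if "p \<in> P" for p
    using q_min \<open>q \<in> K\<close> that by (cases "p \<in> K") (auto simp: K_def)
  with \<open>q \<in> K\<close> show ?thesis by (auto simp: K_def)
qed

lemma knorm_nonneg: "0 \<le> knorm k"
  by (simp add: knorm_def sum_nonneg)

lemma shrink_factor_bounds:
  fixes a t :: real
  assumes "0 < a" "0 \<le> t"
  shows "0 \<le> a / (a + t)" "a / (a + t) \<le> 1" "t * (a / (a + t)) \<le> a"
proof -
  show "0 \<le> a / (a + t)" "a / (a + t) \<le> 1"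
    using assms by simp_all
  have "t * (a / (a + t)) = a * (t / (a + t))" by simp
  also have "\<dots> \<le> a"
    using assms by (intro mult_right_le_one_le) simp_all
  finally show "t * (a / (a + t)) \<le> a" .
qed

lemma norm_solS:
  assumes "0 < \<alpha>"
  shows "cmod (solS G s \<alpha> k) = \<alpha> / (\<alpha> + knorm k powr (2 * s)) * cmod (G k)"
  using shrink_factor_bounds(1)[OF assms powr_ge_zero]
  by (simp only: solS_def norm_mult norm_of_real abs_of_nonneg)

lemma norm_solS_le:
  assumes "0 < \<alpha>"
  shows "cmod (solS G s \<alpha> k) \<le> cmod (G k)"
  unfolding norm_solS[OF assms]
  by (rule mult_left_le_one_le) (use shrink_factor_bounds[OF assms] in simp_all)

lemma knorm_powr_mult_norm_solS_le:
  assumes "0 < \<alpha>"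
  shows "knorm k powr (2 * s) * cmod (solS G s \<alpha> k) \<le> \<alpha> * cmod (G k)"
  unfolding norm_solS[OF assms] mult.assoc[symmetric]
  using shrink_factor_bounds(3)[OF assms, of "knorm k powr (2 * s)"]
  by (intro mult_right_mono) simp_all

lemma H0_solS:
  assumes "L2_0 G" "0 < \<alpha>"
  shows "H0 (2 * s) (solS G s \<alpha>)"
proof -
  have G: "(\<lambda>k. (cmod (G k))\<^sup>2) summable_on UNIV" "G 0 = 0"
    using assms(1) by (simp_all add: L2_0_def ell2_def)
  have "ell2 (solS G s \<alpha>)"
    unfolding ell2_def using G(1)
    by (rule summable_on_comparison_test) (simp_all add: power_mono norm_solS_le[OF assms(2)])
  moreover have "(\<lambda>k. knorm k powr (2 * (2 * s)) * (cmod (solS G s \<alpha> k))\<^sup>2) summable_on UNIV"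
  proof (rule summable_on_comparison_test)
    show "(\<lambda>k. (\<alpha> * cmod (G k))\<^sup>2) summable_on UNIV"
      using G(1) by (simp add: power_mult_distrib summable_on_cmult_right)
    fix k :: "int ^ 'a"
    have "knorm k powr (2 * (2 * s)) * (cmod (solS G s \<alpha> k))\<^sup>2
        = (knorm k powr (2 * s) * cmod (solS G s \<alpha> k))\<^sup>2"
      by (simp add: power_mult_distrib power2_eq_square flip: powr_add)
    also have "\<dots> \<le> (\<alpha> * cmod (G k))\<^sup>2"
      by (intro power_mono knorm_powr_mult_norm_solS_le assms(2)) simp
    finally show "knorm k powr (2 * (2 * s)) * (cmod (solS G s \<alpha> k))\<^sup>2 \<le> (\<alpha> * cmod (G k))\<^sup>2" .
  qed simp
  ultimately show ?thesis
    using G(2) by (simp add: H0_def L2_0_def solS_def)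
qed

lemma continuous_on_solS:
  assumes "\<forall>p\<in>P. 0 < snd p"
  shows "continuous_on P (\<lambda>p. solS G (fst p) (snd p) k)"
proof (cases "knorm k = 0")
  case True
  then have "solS G (fst p) (snd p) k = G k" if "p \<in> P" for p
    using assms that by (auto simp: solS_def)
  then show ?thesis
    using continuous_on_cong[of P P _ "\<lambda>p. G k"] by simp
next
  case False
  then have "0 < knorm k" using knorm_nonneg[of k] by simp
  moreover have "snd p + knorm k powr (2 * fst p) \<noteq> 0" if "p \<in> P" for p
    using assms that powr_ge_zero[of "knorm k" "2 * fst p"] by (smt (verit))
  ultimately show ?thesis
    unfolding solS_def by (intro continuous_intros) auto
qed

lemma continuous_on_ell2_norm_sq_solS_diff:
  assumes "ell2 G" "ell2 U" "\<forall>p\<in>P. 0 < snd p"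
  shows "continuous_on P (\<lambda>p. ell2_norm_sq (\<lambda>k. solS G (fst p) (snd p) k - U k))"
  unfolding ell2_norm_sq_def
proof (rule continuous_on_infsum_dominated)
  show "(\<lambda>k. 2 * (cmod (G k))\<^sup>2 + 2 * (cmod (U k))\<^sup>2) summable_on UNIV"
    using assms(1,2) unfolding ell2_def by (intro summable_on_add summable_on_cmult_right)
  fix k and p :: "real \<times> real" assume "p \<in> P"
  then have "cmod (solS G (fst p) (snd p) k - U k) \<le> cmod (G k) + cmod (U k)"
    using assms(3) norm_solS_le norm_triangle_ineq4 by (smt (verit))
  then have "(cmod (solS G (fst p) (snd p) k - U k))\<^sup>2 \<le> (cmod (G k) + cmod (U k))\<^sup>2"
    by (intro power_mono) simp_all
  also have "\<dots> \<le> 2 * (cmod (G k))\<^sup>2 + 2 * (cmod (U k))\<^sup>2"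
    using sum_squares_bound[of "cmod (G k)" "cmod (U k)"] by (simp add: power2_sum)
  finally show "norm ((cmod (solS G (fst p) (snd p) k - U k))\<^sup>2)
      \<le> 2 * (cmod (G k))\<^sup>2 + 2 * (cmod (U k))\<^sup>2"
    by simp
qed (intro continuous_intros continuous_on_solS assms(3))

lemma C2_on_imp_continuous_on:
  assumes "C2_on S f"
  shows "continuous_on S f"
proof -
  obtain Df :: "'a \<Rightarrow> ('a \<Rightarrow>\<^sub>L real)" where "\<forall>x\<in>S. (f has_derivative blinfun_apply (Df x)) (at x)"
    using assms unfolding C2_on_def by blast
  then show ?thesis
    using continuous_at_imp_continuous_on has_derivative_continuous by blast
qed

theorem theorem3:
  fixes G Ud :: "int ^ 'd \<Rightarrow> complex"
    and \<phi> :: "real \<times> real \<Rightarrow> real"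
    and s0 s1 \<alpha>0 \<alpha>1 :: real
  assumes "0 < s0" "s0 < s1" "0 < \<alpha>0" "\<alpha>0 < \<alpha>1"
    and "L2_0 G" and "ell2 Ud"
    and "C2_on ({s0<..<s1} \<times> {\<alpha>0<..<\<alpha>1}) \<phi>"
    and "\<forall>p\<in>{s0<..<s1} \<times> {\<alpha>0<..<\<alpha>1}. 0 \<le> \<phi> p"
    and "convex_on ({s0<..<s1} \<times> {\<alpha>0<..<\<alpha>1}) \<phi>"
    and "\<forall>p \<in> ({s0..s1} \<times> {\<alpha>0..\<alpha>1}) - ({s0<..<s1} \<times> {\<alpha>0<..<\<alpha>1}).
           filterlim \<phi> at_top (at p within ({s0<..<s1} \<times> {\<alpha>0<..<\<alpha>1}))"
    and "j = (\<lambda>s \<alpha>. 1 / (2 * (2 * pi) ^ CARD('d)) * ell2_norm_sq (\<lambda>k. solS G s \<alpha> k - Ud k)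
                    + \<phi> (s, \<alpha>))"
  shows "\<exists>sb ab. sb \<in> {s0<..<s1} \<and> ab \<in> {\<alpha>0<..<\<alpha>1} \<and>
           (\<forall>s\<in>{s0<..<s1}. \<forall>\<alpha>\<in>{\<alpha>0<..<\<alpha>1}. j sb ab \<le> j s \<alpha>) \<and>
           H0 (2 * sb) (solS G sb ab)"
  proof -
  define P where "P = {s0<..<s1} \<times> {\<alpha>0<..<\<alpha>1}"
  define J where "J = (\<lambda>p. j (fst p) (snd p))"
  have \<alpha>_pos: "\<forall>p\<in>P. 0 < snd p"
    using assms(3) by (auto simp: P_def)
  have J_eq: "J = (\<lambda>p. 1 / (2 * (2 * pi) ^ CARD('d))
      * ell2_norm_sq (\<lambda>k. solS G (fst p) (snd p) k - Ud k) + \<phi> p)"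
    using assms(11) by (simp add: J_def)
  have "continuous_on P J"
    unfolding J_eq using assms(5-7) \<alpha>_pos
    by (intro continuous_intros continuous_on_ell2_norm_sq_solS_diff C2_on_imp_continuous_on)
      (simp_all add: L2_0_def P_def)
  moreover have "\<phi> p \<le> J p" for p
    unfolding J_eq by (simp add: ell2_norm_sq_def infsum_nonneg)
  then have "\<forall>l \<in> {s0..s1} \<times> {\<alpha>0..\<alpha>1} - P. filterlim J at_top (at l within P)"
    using assms(10) filterlim_at_top_mono[OF _ always_eventually] unfolding P_def by blast
  moreover have "P \<subseteq> {s0..s1} \<times> {\<alpha>0..\<alpha>1}"
    by (auto simp: P_def)
  moreover have "((s0 + s1) / 2, (\<alpha>0 + \<alpha>1) / 2) \<in> P"
    using assms(2,4) by (simp add: P_def)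
  ultimately have "\<exists>q\<in>P. \<forall>p\<in>P. J q \<le> J p"
    by (intro continuous_on_attains_inf_coercive[of _ _ "{s0..s1} \<times> {\<alpha>0..\<alpha>1}"])
      (auto intro: compact_Times)
  then obtain q where "q \<in> P" and "\<forall>p\<in>P. J q \<le> J p"
    by blast
  then show ?thesis
    using H0_solS[OF assms(5)] \<alpha>_pos
    by (intro exI[of _ "fst q"] exI[of _ "snd q"]) (auto simp: J_def P_def)
qed

end
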